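(* Let $(X,\|\cdot\|)$ be a normed linear space, let $I$ be a non-trivial admissible ideal in $\mathbb{N}$, let $x=\{x_k\}_{k\in\mathbb{N}}$ be a sequence in $X$ and let $r>0$. Then $\operatorname{diam}(I\text{-}st\text{-}\mathrm{LIM}_x^r)\le 2r$. In particular, if $x$ is $I$-statistically convergent to $\xi\in X$, then $I\text{-}st\text{-}\mathrm{LIM}_x^r\supset \overline{B_r(\xi)}=\{y\in X:\|y-\xi\|\le r\}$, and so $\operatorname{diam}(I\text{-}st\text{-}\mathrm{LIM}_x^r)=2r$.
   Context: An ideal $I$ in $\mathbb{N}$ is a family of subsets of $\mathbb{N}$ containing $\emptyset$, closed under finite unions and under taking subsets; it is non-trivial if $\mathbb{N}\notin I$ and admissible if $\{n\}\in I$ for every $n\in\mathbb{N}$. A sequence $x=\{x_k\}$ in $X$ is $I$-statistically convergent to $\xi$ if for every $\varepsilon>0$ and $\delta>0$, $\{n\in\mathbb{N}:\frac1n|\{k\le n:\|x_k-\xi\|\ge\varepsilon\}|\ge\delta\}\in I$. For $r\ge 0$, $x$ is rough $I$-statistically convergent (or $r$-$I$-statistically convergent) to $\xi$ if for every $\varepsilon>0$ and $\delta>0$, $\{n\in\mathbb{N}:\frac1n|\{k\le n:\|x_k-\xi\|\ge r+\varepsilon\}|\ge\delta\}\in I$. $I\text{-}st\text{-}\mathrm{LIM}_x^r$ denotes the set of all $\xi\in X$ to which $x$ is $r$-$I$-statistically convergent. *)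

theory Defs
  imports "HOL-Analysis.Analysis"
begin

definition is_ideal :: "nat set set \<Rightarrow> bool" where
  "is_ideal I \<longleftrightarrow> {} \<in> I \<and> (\<forall>A\<in>I. \<forall>B\<in>I. A \<union> B \<in> I) \<and> (\<forall>A\<in>I. \<forall>B. B \<subseteq> A \<longrightarrow> B \<in> I)"

definition nontrivial_ideal :: "nat set set \<Rightarrow> bool" where
  "nontrivial_ideal I \<longleftrightarrow> UNIV \<notin> I"

definition admissible_ideal :: "nat set set \<Rightarrow> bool" where
  "admissible_ideal I \<longleftrightarrow> (\<forall>n. {n} \<in> I)"

text \<open>Terms of the sequence are x 1, x 2, ...; the density (1/n)|{k \<le> n : ...}| uses k in {1..n}.\<close>
definition I_stat_conv :: "nat set set \<Rightarrow> (nat \<Rightarrow> 'a::real_normed_vector) \<Rightarrow> 'a \<Rightarrow> bool" where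
  "I_stat_conv I x \<xi> \<longleftrightarrow> (\<forall>\<epsilon>>0. \<forall>\<delta>>0.
     {n. real (card {k\<in>{1..n}. norm (x k - \<xi>) \<ge> \<epsilon>}) / real n \<ge> \<delta>} \<in> I)"

definition rough_I_stat_conv :: "nat set set \<Rightarrow> real \<Rightarrow> (nat \<Rightarrow> 'a::real_normed_vector) \<Rightarrow> 'a \<Rightarrow> bool" where
  "rough_I_stat_conv I r x \<xi> \<longleftrightarrow> (\<forall>\<epsilon>>0. \<forall>\<delta>>0.
     {n. real (card {k\<in>{1..n}. norm (x k - \<xi>) \<ge> r + \<epsilon>}) / real n \<ge> \<delta>} \<in> I)"

definition I_st_LIM :: "nat set set \<Rightarrow> real \<Rightarrow> (nat \<Rightarrow> 'a::real_normed_vector) \<Rightarrow> 'a set" where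
  "I_st_LIM I r x = {\<xi>. rough_I_stat_conv I r x \<xi>}"

end

theory Submission
  imports Defs
begin

text \<open>If a and b are both rough I-statistical limits with \<open>\<parallel>a - b\<parallel> > 2r\<close>, put
  \<open>\<epsilon> = (\<parallel>a - b\<parallel> - 2r)/2\<close>. By the triangle inequality every index k is \<open>\<epsilon>\<close>-far (beyond
  radius r) from a or from b, so for every n \<open>\<ge>\<close> 1 one of the two exceptional sets has density
  at least 1/2. Hence the two sets of density \<open>\<ge>\<close> 1/2, both in I, together with {0} cover
  \<open>\<nat>\<close> (at n = 0 the density is the junk value 0/0 = 0, and admissibility puts {0} into I),
  contradicting non-triviality. Conversely, if x is I-statistically convergent to \<open>\<xi>\<close>,
  any y with \<open>\<parallel>y - \<xi>\<parallel> \<le> r\<close> has exceptional sets for \<open>r + \<epsilon>\<close> contained in those of \<open>\<xi>\<close> for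
  \<open>\<epsilon>\<close>, so the closed ball of radius r around \<open>\<xi>\<close> consists of rough limits, and its diameter is
  2r as soon as the space is non-trivial.\<close>

lemma ideal_Un:
  "is_ideal I \<Longrightarrow> A \<in> I \<Longrightarrow> B \<in> I \<Longrightarrow> A \<union> B \<in> I"
  unfolding is_ideal_def by blast

lemma ideal_subset:
  "is_ideal I \<Longrightarrow> A \<in> I \<Longrightarrow> B \<subseteq> A \<Longrightarrow> B \<in> I"
  unfolding is_ideal_def by blast

lemma density_mono:
  assumes "\<And>k. P k \<Longrightarrow> Q k"
  shows "real (card {k\<in>{1..n}. P k}) / real n \<le> real (card {k\<in>{1..n}. Q k}) / real n"
proof -
  have "card {k\<in>{1..n}. P k} \<le> card {k\<in>{1..n}. Q k}"
    by (rule card_mono) (use assms in auto)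
  then show ?thesis by (simp add: divide_right_mono)
qed

lemma density_half_of_cover:
  assumes "n > 0" and cover: "\<And>k. k \<in> {1..n} \<Longrightarrow> P k \<or> Q k"
  shows "1/2 \<le> real (card {k\<in>{1..n}. P k}) / real n \<or>
         1/2 \<le> real (card {k\<in>{1..n}. Q k}) / real n"
proof -
  have "{1..n} = {k\<in>{1..n}. P k} \<union> {k\<in>{1..n}. Q k}" using cover by blast
  then have "n \<le> card {k\<in>{1..n}. P k} + card {k\<in>{1..n}. Q k}"
    by (metis card_Un_le card_atLeastAtMost diff_Suc_1)
  then have "real n \<le> 2 * real (card {k\<in>{1..n}. P k}) \<or> real n \<le> 2 * real (card {k\<in>{1..n}. Q k})"
    by linarith
  moreover have "1/2 \<le> real m / real n" if "real n \<le> 2 * real m" for m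
    using that \<open>n > 0\<close> by (simp add: le_divide_eq)
  ultimately show ?thesis by blast
qed

lemma nontrivial_admissible_ideal_Un_avoids:
  assumes "is_ideal I" "nontrivial_ideal I" "admissible_ideal I" "A \<in> I" "B \<in> I"
  shows "\<exists>n>0. n \<notin> A \<and> n \<notin> B"
proof (rule ccontr)
  assume "\<not> ?thesis"
  then have "A \<union> B \<union> {0} = UNIV" using not_gr0 by blast
  moreover have "A \<union> B \<union> {0} \<in> I"
    using assms(1,3-5) by (intro ideal_Un) (auto simp: admissible_ideal_def)
  ultimately show False using assms(2) by (simp add: nontrivial_ideal_def)
qed

lemma rough_I_stat_convD:
  "rough_I_stat_conv I r x \<xi> \<Longrightarrow> \<epsilon> > 0 \<Longrightarrow> \<delta> > 0 \<Longrightarrow>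
    {n. \<delta> \<le> real (card {k\<in>{1..n}. r + \<epsilon> \<le> norm (x k - \<xi>)}) / real n} \<in> I"
  unfolding rough_I_stat_conv_def by blast

lemma I_st_LIM_norm_diff_le:
  assumes ideal: "is_ideal I" "nontrivial_ideal I" "admissible_ideal I"
    and a: "a \<in> I_st_LIM I r x" and b: "b \<in> I_st_LIM I r x"
  shows "norm (a - b) \<le> 2 * r"
proof (rule ccontr)
  assume "\<not> norm (a - b) \<le> 2 * r"
  define \<epsilon> where "\<epsilon> = (norm (a - b) - 2 * r) / 2"
  have "\<epsilon> > 0" using \<open>\<not> norm (a - b) \<le> 2 * r\<close> by (simp add: \<epsilon>_def)
  define far where "far c n \<longleftrightarrow> 1/2 \<le> real (card {k\<in>{1..n}. r + \<epsilon> \<le> norm (x k - c)}) / real n"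
    for c n
  have far_in_I: "{n. far c n} \<in> I" if "c \<in> I_st_LIM I r x" for c
    unfolding far_def using that \<open>\<epsilon> > 0\<close>
    by (intro rough_I_stat_convD) (simp_all add: I_st_LIM_def)
  obtain n where "n > 0" "\<not> far a n" "\<not> far b n"
    using nontrivial_admissible_ideal_Un_avoids[OF ideal far_in_I[OF a] far_in_I[OF b]] by blast
  have split: "r + \<epsilon> \<le> norm (x k - a) \<or> r + \<epsilon> \<le> norm (x k - b)" for k
  proof -
    have "norm (a - b) \<le> norm (x k - a) + norm (x k - b)"
      using norm_triangle_ineq4[of "x k - b" "x k - a"] by simp
    then show ?thesis unfolding \<epsilon>_def by argo
  qed
  have "far a n \<or> far b n"
    unfolding far_def using \<open>n > 0\<close> split by (rule density_half_of_cover)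
  with \<open>\<not> far a n\<close> \<open>\<not> far b n\<close> show False by blast
qed

lemma I_stat_conv_imp_rough_I_stat_conv:
  assumes "is_ideal I" "I_stat_conv I x \<xi>" "norm (y - \<xi>) \<le> r"
  shows "rough_I_stat_conv I r x y"
  unfolding rough_I_stat_conv_def
proof (intro allI impI)
  fix \<epsilon> \<delta> :: real
  assume "\<epsilon> > 0" "\<delta> > 0"
  then have "{n. \<delta> \<le> real (card {k\<in>{1..n}. \<epsilon> \<le> norm (x k - \<xi>)}) / real n} \<in> I"
    using assms(2) unfolding I_stat_conv_def by simp
  moreover have "{n. \<delta> \<le> real (card {k\<in>{1..n}. r + \<epsilon> \<le> norm (x k - y)}) / real n}
      \<subseteq> {n. \<delta> \<le> real (card {k\<in>{1..n}. \<epsilon> \<le> norm (x k - \<xi>)}) / real n}"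
  proof (intro Collect_mono impI)
    fix n
    assume "\<delta> \<le> real (card {k\<in>{1..n}. r + \<epsilon> \<le> norm (x k - y)}) / real n"
    moreover have "r + \<epsilon> \<le> norm (x k - y) \<Longrightarrow> \<epsilon> \<le> norm (x k - \<xi>)" for k
      using norm_triangle_ineq4[of "x k - \<xi>" "y - \<xi>"] assms(3) by simp
    then have "real (card {k\<in>{1..n}. r + \<epsilon> \<le> norm (x k - y)}) / real n
        \<le> real (card {k\<in>{1..n}. \<epsilon> \<le> norm (x k - \<xi>)}) / real n"
      by (rule density_mono)
    ultimately show "\<delta> \<le> real (card {k\<in>{1..n}. \<epsilon> \<le> norm (x k - \<xi>)}) / real n"
      by linarith
  qed
  ultimately show "{n. \<delta> \<le> real (card {k\<in>{1..n}. r + \<epsilon> \<le> norm (x k - y)}) / real n} \<in> I"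
    by (rule ideal_subset[OF assms(1)])
qed

lemma cball_subset_I_st_LIM:
  assumes "is_ideal I" "I_stat_conv I x \<xi>"
  shows "cball \<xi> r \<subseteq> I_st_LIM I r x"
proof
  fix y
  assume "y \<in> cball \<xi> r"
  then have "norm (y - \<xi>) \<le> r" by (simp add: dist_norm norm_minus_commute)
  then show "y \<in> I_st_LIM I r x"
    using I_stat_conv_imp_rough_I_stat_conv[OF assms] by (simp add: I_st_LIM_def)
qed

lemma diameter_cball_ge:
  fixes \<xi> v :: "'a::real_normed_vector"
  assumes "r \<ge> 0" and "v \<noteq> 0"
  shows "2 * r \<le> diameter (cball \<xi> r)"
proof -
  define u where "u = (r / norm v) *\<^sub>R v"
  have "norm u = r" using assms by (simp add: u_def)
  then have "\<xi> + u \<in> cball \<xi> r" "\<xi> - u \<in> cball \<xi> r" by (simp_all add: dist_norm)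
  moreover have "dist (\<xi> + u) (\<xi> - u) = 2 * r"
    using \<open>norm u = r\<close> by (simp add: dist_norm flip: scaleR_2)
  ultimately show ?thesis by (metis bounded_cball diameter_bounded_bound)
qed

theorem theorem3p1:
  fixes I :: "nat set set" and x :: "nat \<Rightarrow> 'a::real_normed_vector" and r :: real
  assumes "is_ideal I" and "nontrivial_ideal I" and "admissible_ideal I" and "r > 0"
  shows "(bounded (I_st_LIM I r x) \<and> diameter (I_st_LIM I r x) \<le> 2 * r) \<and>
         (\<forall>\<xi>. I_stat_conv I x \<xi> \<longrightarrow>
           cball \<xi> r \<subseteq> I_st_LIM I r x \<and>
           ((\<exists>v::'a. v \<noteq> 0) \<longrightarrow> diameter (I_st_LIM I r x) = 2 * r))"
proof -
  note close = I_st_LIM_norm_diff_le[OF assms(1-3)]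
  have bounded: "bounded (I_st_LIM I r x)"
    unfolding bounded_two_points dist_norm using close by blast
  have diameter_le: "diameter (I_st_LIM I r x) \<le> 2 * r"
    by (rule diameter_le) (use \<open>r > 0\<close> close in auto)
  note cball = cball_subset_I_st_LIM[OF assms(1)]
  have "diameter (I_st_LIM I r x) = 2 * r" if "I_stat_conv I x \<xi>" "v \<noteq> 0" for \<xi> and v :: 'a
    using diameter_cball_ge[OF _ \<open>v \<noteq> 0\<close>, of r \<xi>] diameter_subset[OF cball[OF that(1)] bounded]
      diameter_le \<open>r > 0\<close>
    by linarith
  with bounded diameter_le cball show ?thesis by blast
qed

end
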